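(* Let $d\ge2$, $q\ge2$ even, $\boldsymbol\theta\in\mathbb{R}^d$, and let $\mathbf a_1,\mathbf a_2\in\mathbb{R}^d$ be linearly independent. Then for every symmetric positive definite $d\times d$ matrix $\mathrm Q$, the (constant) vector $\nabla(\nabla^\top\mathrm Q\nabla)^{q/2}\big[(\mathbf a_1^\top(\mathbf x-\boldsymbol\theta))^q(\mathbf a_2^\top(\mathbf x-\boldsymbol\theta))\big]$ is non-zero.
   Context: $\nabla$ is the gradient with respect to $\mathbf x\in\mathbb{R}^d$; $(\nabla^\top\mathrm Q\nabla)^{q/2}$ is the $q/2$-fold application of the second-order differential operator $\nabla^\top\mathrm Q\nabla$. *)

theory Defs
  imports "HOL-Analysis.Analysis"
begin

definition partial :: "'n::finite \<Rightarrow> (real^'n \<Rightarrow> real) \<Rightarrow> real^'n \<Rightarrow> real" where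
  "partial i f x = deriv (\<lambda>t. f (x + t *\<^sub>R axis i 1)) 0"

definition grad :: "(real^'n::finite \<Rightarrow> real) \<Rightarrow> real^'n \<Rightarrow> real^'n" where
  "grad f x = (\<chi> i. partial i f x)"

definition quad_op :: "real^'n::finite^'n \<Rightarrow> (real^'n \<Rightarrow> real) \<Rightarrow> real^'n \<Rightarrow> real" where
  "quad_op Q f x = (\<Sum>i\<in>UNIV. \<Sum>j\<in>UNIV. Q$i$j * partial i (partial j f) x)"

definition sym_posdef :: "real^'n::finite^'n \<Rightarrow> bool" where
  "sym_posdef Q \<longleftrightarrow> transpose Q = Q \<and> (\<forall>x. x \<noteq> 0 \<longrightarrow> x \<bullet> (Q *v x) > 0)"

end

(*
  With u = a1 \<bullet> (x - \<theta>) and w = a2 \<bullet> (x - \<theta>), the function is P(u, w) for the polynomial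
  P = u^q w, and \<nabla>\<^sup>T Q \<nabla> acts on functions of this form as the constant-coefficient operator
  D = \<alpha> \<partial>u\<^sup>2 + \<beta> \<partial>u \<partial>w + \<gamma> \<partial>w\<^sup>2 on P, where \<alpha> = a1\<^sup>T Q a1 > 0. Each application of D lowers
  the degree by two, so D^(q/2) P = c1 u + c2 w and the gradient is the constant c1 a1 + c2 a2.
  Since \<partial>w commutes with D, c2 = D^(q/2) (u^q) = \<alpha>^(q/2) q! \<noteq> 0, and independence of a1, a2
  makes the gradient non-zero.
*)
theory Submission
  imports Defs
begin

type_synonym bipoly = "(real \<times> nat \<times> nat) list"

definition eval_bipoly :: "bipoly \<Rightarrow> real \<Rightarrow> real \<Rightarrow> real" where
  "eval_bipoly p u w = (\<Sum>(c, k, l) \<leftarrow> p. c * u ^ k * w ^ l)"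

text \<open>Monomials annihilated by a derivative are dropped, so the truncated exponent \<open>k - 1\<close>
  (resp. \<open>l - 1\<close>) only ever occurs for a positive exponent.\<close>

definition bipoly_du :: "bipoly \<Rightarrow> bipoly" where
  "bipoly_du p = [(c * real k, k - 1, l). (c, k, l) \<leftarrow> p, 0 < k]"

definition bipoly_dw :: "bipoly \<Rightarrow> bipoly" where
  "bipoly_dw p = [(c * real l, k, l - 1). (c, k, l) \<leftarrow> p, 0 < l]"

definition bipoly_scale :: "real \<Rightarrow> bipoly \<Rightarrow> bipoly" where
  "bipoly_scale a p = [(a * c, k, l). (c, k, l) \<leftarrow> p]"

lemma eval_bipoly_simps [simp]:
  "eval_bipoly [] u w = 0"
  "eval_bipoly ((c, k, l) # p) u w = c * u ^ k * w ^ l + eval_bipoly p u w"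
  "eval_bipoly (p @ p') u w = eval_bipoly p u w + eval_bipoly p' u w"
  by (simp_all add: eval_bipoly_def)

lemma eval_bipoly_scale [simp]: "eval_bipoly (bipoly_scale a p) u w = a * eval_bipoly p u w"
  by (induction p) (auto simp: bipoly_scale_def algebra_simps)

lemma bipoly_du_append [simp]: "bipoly_du (p @ p') = bipoly_du p @ bipoly_du p'"
  by (simp add: bipoly_du_def)

lemma bipoly_dw_append [simp]: "bipoly_dw (p @ p') = bipoly_dw p @ bipoly_dw p'"
  by (simp add: bipoly_dw_def)

lemma bipoly_du_scale [simp]: "bipoly_du (bipoly_scale a p) = bipoly_scale a (bipoly_du p)"
  by (induction p) (auto simp: bipoly_du_def bipoly_scale_def)

lemma bipoly_dw_scale [simp]: "bipoly_dw (bipoly_scale a p) = bipoly_scale a (bipoly_dw p)"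
  by (induction p) (auto simp: bipoly_dw_def bipoly_scale_def)

lemma bipoly_dw_du: "bipoly_dw (bipoly_du p) = bipoly_du (bipoly_dw p)"
  by (induction p) (auto simp: bipoly_du_def bipoly_dw_def)

lemma eval_bipoly_du_Cons [simp]:
  "eval_bipoly (bipoly_du ((c, k, l) # p)) u w
     = c * real k * u ^ (k - 1) * w ^ l + eval_bipoly (bipoly_du p) u w"
  by (simp add: bipoly_du_def)

lemma eval_bipoly_dw_Cons [simp]:
  "eval_bipoly (bipoly_dw ((c, k, l) # p)) u w
     = c * real l * u ^ k * w ^ (l - 1) + eval_bipoly (bipoly_dw p) u w"
  by (simp add: bipoly_dw_def)

lemma has_real_derivative_eval_bipoly:
  "((\<lambda>t. eval_bipoly p (u + t * a) (w + t * b)) has_real_derivative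
     a * eval_bipoly (bipoly_du p) u w + b * eval_bipoly (bipoly_dw p) u w) (at 0)"
proof (induction p)
  case Nil
  then show ?case by (simp add: bipoly_du_def bipoly_dw_def)
next
  case (Cons m p)
  obtain c k l where m: "m = (c, k, l)" by (cases m)
  have "((\<lambda>t. c * (u + t * a) ^ k * (w + t * b) ^ l) has_real_derivative
      a * (c * real k * u ^ (k - 1) * w ^ l) + b * (c * real l * u ^ k * w ^ (l - 1))) (at 0)"
    by (rule derivative_eq_intros refl | simp)+
  from DERIV_add[OF this Cons.IH] show ?case
    by (simp add: m algebra_simps)
qed

definition bipoly_op :: "real \<Rightarrow> real \<Rightarrow> real \<Rightarrow> bipoly \<Rightarrow> bipoly" where
  "bipoly_op \<alpha> \<beta> \<gamma> p = bipoly_scale \<alpha> (bipoly_du (bipoly_du p))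
     @ bipoly_scale \<beta> (bipoly_du (bipoly_dw p)) @ bipoly_scale \<gamma> (bipoly_dw (bipoly_dw p))"

lemma bipoly_dw_op: "bipoly_dw (bipoly_op \<alpha> \<beta> \<gamma> p) = bipoly_op \<alpha> \<beta> \<gamma> (bipoly_dw p)"
  by (simp add: bipoly_op_def bipoly_dw_du)

lemma bipoly_dw_op_funpow:
  "bipoly_dw ((bipoly_op \<alpha> \<beta> \<gamma> ^^ n) p) = (bipoly_op \<alpha> \<beta> \<gamma> ^^ n) (bipoly_dw p)"
  by (induction n) (simp_all add: bipoly_dw_op)

lemma bipoly_op_funpow_pure_power:
  "(bipoly_op \<alpha> \<beta> \<gamma> ^^ j) [(c, 2 * j, 0)] = [(\<alpha> ^ j * c * fact (2 * j), 0, 0)]"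
proof (induction j arbitrary: c)
  case 0
  then show ?case by simp
next
  case (Suc j)
  have "bipoly_op \<alpha> \<beta> \<gamma> [(c, 2 * Suc j, 0)] = [(\<alpha> * (c * real (Suc (Suc (2 * j))) * real (Suc (2 * j))), 2 * j, 0)]"
    by (simp add: bipoly_op_def bipoly_du_def bipoly_dw_def bipoly_scale_def)
  then show ?case
    by (simp add: funpow_Suc_right Suc.IH del: funpow.simps)
qed

definition bipoly_lift :: "real^'n::finite \<Rightarrow> real^'n \<Rightarrow> real^'n \<Rightarrow> bipoly \<Rightarrow> real^'n \<Rightarrow> real" where
  "bipoly_lift a b \<theta> p x = eval_bipoly p (a \<bullet> (x - \<theta>)) (b \<bullet> (x - \<theta>))"

lemma partial_bipoly_lift:
  "partial i (bipoly_lift a b \<theta> p)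
     = bipoly_lift a b \<theta> (bipoly_scale (a $ i) (bipoly_du p) @ bipoly_scale (b $ i) (bipoly_dw p))"
proof
  fix x
  have shift: "c \<bullet> (x + t *\<^sub>R axis i 1 - \<theta>) = c \<bullet> (x - \<theta>) + t * c $ i" for c :: "real^_" and t
    by (simp add: inner_diff_right inner_add_right inner_axis algebra_simps)
  show "partial i (bipoly_lift a b \<theta> p) x
      = bipoly_lift a b \<theta> (bipoly_scale (a $ i) (bipoly_du p) @ bipoly_scale (b $ i) (bipoly_dw p)) x"
    unfolding partial_def bipoly_lift_def shift
    by (simp add: DERIV_imp_deriv[OF has_real_derivative_eval_bipoly])
qed

lemma grad_bipoly_lift:
  "grad (bipoly_lift a b \<theta> p) x
     = eval_bipoly (bipoly_du p) (a \<bullet> (x - \<theta>)) (b \<bullet> (x - \<theta>)) *\<^sub>R a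
       + eval_bipoly (bipoly_dw p) (a \<bullet> (x - \<theta>)) (b \<bullet> (x - \<theta>)) *\<^sub>R b"
  by (simp add: grad_def partial_bipoly_lift bipoly_lift_def vec_eq_iff algebra_simps)

lemma quad_op_bipoly_lift:
  "quad_op Q (bipoly_lift a b \<theta> p) = bipoly_lift a b \<theta>
     (bipoly_op (a \<bullet> (Q *v a)) (a \<bullet> (Q *v b) + b \<bullet> (Q *v a)) (b \<bullet> (Q *v b)) p)"
proof
  fix x
  show "quad_op Q (bipoly_lift a b \<theta> p) x = bipoly_lift a b \<theta>
     (bipoly_op (a \<bullet> (Q *v a)) (a \<bullet> (Q *v b) + b \<bullet> (Q *v a)) (b \<bullet> (Q *v b)) p) x"
    unfolding quad_op_def partial_bipoly_lift
    by (simp add: bipoly_lift_def bipoly_op_def bipoly_dw_du inner_vec_def matrix_vector_mult_def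
        algebra_simps sum.distrib sum_distrib_left sum_distrib_right)
qed

lemma quad_op_funpow_bipoly_lift:
  "(quad_op Q ^^ n) (bipoly_lift a b \<theta> p) = bipoly_lift a b \<theta>
     ((bipoly_op (a \<bullet> (Q *v a)) (a \<bullet> (Q *v b) + b \<bullet> (Q *v a)) (b \<bullet> (Q *v b)) ^^ n) p)"
  by (induction n) (simp_all add: quad_op_bipoly_lift)

definition homogeneous_bipoly :: "nat \<Rightarrow> bipoly \<Rightarrow> bool" where
  "homogeneous_bipoly n p \<longleftrightarrow> (\<forall>(c, k, l) \<in> set p. k + l = n)"

lemma homogeneous_bipoly_du: "homogeneous_bipoly (Suc n) p \<Longrightarrow> homogeneous_bipoly n (bipoly_du p)"
  unfolding homogeneous_bipoly_def bipoly_du_def by fastforce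

lemma homogeneous_bipoly_dw: "homogeneous_bipoly (Suc n) p \<Longrightarrow> homogeneous_bipoly n (bipoly_dw p)"
  unfolding homogeneous_bipoly_def bipoly_dw_def by fastforce

lemma homogeneous_bipoly_scale: "homogeneous_bipoly n p \<Longrightarrow> homogeneous_bipoly n (bipoly_scale a p)"
  unfolding homogeneous_bipoly_def bipoly_scale_def by fastforce

lemma homogeneous_bipoly_append:
  "homogeneous_bipoly n p \<Longrightarrow> homogeneous_bipoly n p' \<Longrightarrow> homogeneous_bipoly n (p @ p')"
  unfolding homogeneous_bipoly_def by auto

lemma homogeneous_bipoly_op:
  "homogeneous_bipoly (Suc (Suc n)) p \<Longrightarrow> homogeneous_bipoly n (bipoly_op \<alpha> \<beta> \<gamma> p)"
  unfolding bipoly_op_def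
  by (intro homogeneous_bipoly_append homogeneous_bipoly_scale homogeneous_bipoly_du homogeneous_bipoly_dw)

lemma homogeneous_bipoly_op_funpow:
  "homogeneous_bipoly (n + 2 * j) p \<Longrightarrow> homogeneous_bipoly n ((bipoly_op \<alpha> \<beta> \<gamma> ^^ j) p)"
proof (induction j arbitrary: p)
  case 0
  then show ?case by simp
next
  case (Suc j)
  then have "homogeneous_bipoly (n + 2 * j) (bipoly_op \<alpha> \<beta> \<gamma> p)"
    by (intro homogeneous_bipoly_op) (simp add: add.assoc)
  with Suc.IH show ?case by (simp add: funpow_Suc_right del: funpow.simps)
qed

lemma eval_homogeneous_bipoly_0:
  "homogeneous_bipoly 0 p \<Longrightarrow> eval_bipoly p u w = sum_list (map fst p)"
  unfolding homogeneous_bipoly_def by (induction p) auto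

lemma grad_bipoly_lift_linear:
  assumes "homogeneous_bipoly 1 p"
  shows "grad (bipoly_lift a b \<theta> p) x
    = eval_bipoly (bipoly_du p) 0 0 *\<^sub>R a + eval_bipoly (bipoly_dw p) 0 0 *\<^sub>R b"
proof -
  have "homogeneous_bipoly 0 (bipoly_du p)" "homogeneous_bipoly 0 (bipoly_dw p)"
    using assms by (simp_all add: homogeneous_bipoly_du homogeneous_bipoly_dw)
  then show ?thesis
    by (simp add: grad_bipoly_lift eval_homogeneous_bipoly_0)
qed

lemma independent_pair_combination_nonzero:
  fixes a b :: "'a::real_vector"
  assumes "independent {a, b}" "a \<noteq> b" "s \<noteq> 0"
  shows "r *\<^sub>R a + s *\<^sub>R b \<noteq> 0"
proof
  assume "r *\<^sub>R a + s *\<^sub>R b = 0"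
  then have "s *\<^sub>R b = (- r) *\<^sub>R a"
    by (simp add: add_eq_0_iff)
  with \<open>s \<noteq> 0\<close> have "b = (- r / s) *\<^sub>R a"
    unfolding eq_vector_fraction_iff by simp
  then have "b \<in> span {a}"
    by (metis span_base span_scale singletonI)
  moreover have "independent (insert b {a})"
    using assms(1) by (metis insert_commute)
  ultimately show False
    using assms(2) by (simp add: independent_insert)
qed

theorem lemmaD2:
  fixes q :: nat and \<theta> a1 a2 :: "real^'n::finite" and Q :: "real^'n^'n"
  assumes "CARD('n) \<ge> 2"
    and "q \<ge> 2" and "even q"
    and "independent {a1, a2}" and "a1 \<noteq> a2"
    and "sym_posdef Q"
  shows "\<exists>v. v \<noteq> 0 \<and> (\<forall>x. grad (((quad_op Q) ^^ (q div 2))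
            (\<lambda>x. (a1 \<bullet> (x - \<theta>)) ^ q * (a2 \<bullet> (x - \<theta>)))) x = v)"
proof -
  obtain m where q: "q = 2 * m"
    using \<open>even q\<close> by blast
  define \<alpha> where "\<alpha> = a1 \<bullet> (Q *v a1)"
  define r where "r = (bipoly_op \<alpha> (a1 \<bullet> (Q *v a2) + a2 \<bullet> (Q *v a1)) (a2 \<bullet> (Q *v a2)) ^^ m) [(1, q, 1)]"
  have "(\<lambda>x. (a1 \<bullet> (x - \<theta>)) ^ q * (a2 \<bullet> (x - \<theta>))) = bipoly_lift a1 a2 \<theta> [(1, q, 1)]"
    by (simp add: bipoly_lift_def fun_eq_iff)
  then have lift: "(quad_op Q ^^ (q div 2)) (\<lambda>x. (a1 \<bullet> (x - \<theta>)) ^ q * (a2 \<bullet> (x - \<theta>)))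
      = bipoly_lift a1 a2 \<theta> r"
    by (simp add: quad_op_funpow_bipoly_lift r_def \<alpha>_def q)
  have linear: "homogeneous_bipoly 1 r"
    unfolding r_def by (rule homogeneous_bipoly_op_funpow) (simp add: homogeneous_bipoly_def q)
  have "a1 \<noteq> 0"
    using assms(4) dependent_zero by blast
  then have "\<alpha> > 0"
    using assms(6) unfolding \<alpha>_def sym_posdef_def by blast
  moreover have "bipoly_dw r = [(\<alpha> ^ m * fact q, 0, 0)]"
    unfolding r_def bipoly_dw_op_funpow by (simp add: bipoly_dw_def q bipoly_op_funpow_pure_power)
  ultimately have "eval_bipoly (bipoly_dw r) 0 0 \<noteq> 0"
    by simp
  then have "eval_bipoly (bipoly_du r) 0 0 *\<^sub>R a1 + eval_bipoly (bipoly_dw r) 0 0 *\<^sub>R a2 \<noteq> 0"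
    by (rule independent_pair_combination_nonzero[OF assms(4,5)])
  then show ?thesis
    unfolding lift grad_bipoly_lift_linear[OF linear] by blast
qed

end
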